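(* For every $n \ge 1$ and every $\omega \in S_n$, the poset $M_\omega$ is $B_2$-free if and only if $\omega$ avoids both the pattern $3412$ and the pattern $3421$.
   Context: Permutations $\omega\in S_n$ are written in one-line notation $\omega=\omega(1)\omega(2)\cdots\omega(n)$. Let ${\rm Inv}(\omega)=\{(i,j): 1\le i<j\le n,\ \omega(i)>\omega(j)\}$. For $1\le i\le n$ let $c_i(\omega)=\#\{j: i<j\le n,\ \omega(i)>\omega(j)\}$, and for $1\le i<j\le n$ let $c_{i,j}(\omega)=\#\{k: i<k<j,\ \omega(i)>\omega(k)\}$. Write $[m]=\{1,\dots,m\}$. For $i\in[n]$ with $c_i(\omega)>0$ and $x\in[c_i(\omega)]$, define $m_{i,x}(\omega)\in\mathbb{N}^n$ coordinatewise: its $j$-th coordinate is $0$ if $j<i$; $x$ if $j=i$; $0$ if $j>i$ and $(i,j)\in{\rm Inv}(\omega)$; and $\max\{0,\,x-c_{i,j}(\omega)\}$ if $j>i$ and $(i,j)\notin{\rm Inv}(\omega)$. Let $M_\omega=\{m_{i,x}(\omega): i\in[n],\ c_i(\omega)>0,\ x\in[c_i(\omega)]\}$, partially ordered by the product order on $\mathbb{N}^n$ ($u\le v$ iff $u_k\le v_k$ for all $k$). $B_2$ denotes the Boolean lattice of rank 2 (four elements: a minimum, a maximum, and two incomparable elements between them). A poset $P$ is $B_2$-free if no four distinct elements of $P$ form an induced subposet isomorphic to $B_2$. $\omega$ contains the pattern $3412$ (resp. $3421$) if there exist $i<j<k<l$ with $\omega(k)<\omega(l)<\omega(i)<\omega(j)$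 (resp. $\omega(l)<\omega(k)<\omega(i)<\omega(j)$); $\omega$ avoids the pattern otherwise. *)

theory Defs
  imports Main "HOL-Combinatorics.Permutations"
begin

text \<open>Permutations of [n] are functions nat => nat with w permutes {1..n};
 w i is the i-th entry of the one-line notation.  Vectors in N^n are
 functions nat => nat, coordinate j for j in {1..n}, and 0 elsewhere;
 the product order is then the pointwise order on functions.\<close>

definition inv_count :: "(nat \<Rightarrow> nat) \<Rightarrow> nat \<Rightarrow> nat \<Rightarrow> nat" where
  "inv_count w n i = card {j. i < j \<and> j \<le> n \<and> w i > w j}"

definition inv_count_between :: "(nat \<Rightarrow> nat) \<Rightarrow> nat \<Rightarrow> nat \<Rightarrow> nat" where
  "inv_count_between w i j = card {k. i < k \<and> k < j \<and> w i > w k}"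

definition mvec :: "(nat \<Rightarrow> nat) \<Rightarrow> nat \<Rightarrow> nat \<Rightarrow> nat \<Rightarrow> (nat \<Rightarrow> nat)" where
  "mvec w n i x = (\<lambda>j. if j < i \<or> n < j then 0
                      else if j = i then x
                      else if w i > w j then 0
                      else x - inv_count_between w i j)"

definition Mset :: "(nat \<Rightarrow> nat) \<Rightarrow> nat \<Rightarrow> (nat \<Rightarrow> nat) set" where
  "Mset w n = {mvec w n i x | i x. i \<in> {1..n} \<and> 0 < inv_count w n i \<and> x \<in> {1..inv_count w n i}}"

text \<open>No four elements of P induce a copy of the Boolean lattice B_2
 (distinctness of the four elements follows from the strict inequalities).\<close>
definition B2_free :: "'a::order set \<Rightarrow> bool" where
  "B2_free P \<longleftrightarrow> \<not> (\<exists>a\<in>P. \<exists>b\<in>P. \<exists>c\<in>P. \<exists>d\<in>P.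
      a < b \<and> a < c \<and> b < d \<and> c < d \<and> \<not> b \<le> c \<and> \<not> c \<le> b)"

definition contains_3412 :: "(nat \<Rightarrow> nat) \<Rightarrow> nat \<Rightarrow> bool" where
  "contains_3412 w n \<longleftrightarrow> (\<exists>i j k l. 1 \<le> i \<and> i < j \<and> j < k \<and> k < l \<and> l \<le> n \<and>
      w k < w l \<and> w l < w i \<and> w i < w j)"

definition contains_3421 :: "(nat \<Rightarrow> nat) \<Rightarrow> nat \<Rightarrow> bool" where
  "contains_3421 w n \<longleftrightarrow> (\<exists>i j k l. 1 \<le> i \<and> i < j \<and> j < k \<and> k < l \<and> l \<le> n \<and>
      w l < w k \<and> w k < w i \<and> w i < w j)"

end

theory Submission
  imports Defs
begin

text \<open>
  Every vector m_{i,x} is determined by its index pair (i,x), and the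
  product order between two such vectors has an exact combinatorial description
  (lemma mvec_le_iff): m_{i,x} \<le> m_{i',y} holds iff either i' = i and x \<le> y, or
  i' < i, w(i') < w(i) and x + c_{i',i} \<le> y.  All inversion counts are cardinalities
  of the sets below w lo hi v of positions strictly between lo and hi carrying a
  value below v; these split additively at any position whose value is not below v.

  Both patterns 3412 and 3421 amount to a "34 followed by two smaller entries":
  positions p < q with w(p) < w(q) and at least two later values below w(p)
  (predicate pattern_34).  Given such p, q the four vectors m_{q,1}, m_{p,c+1},
  m_{q,2}, m_{p,c+2} with c = c_{p,q} form a copy of B_2.  Conversely, from a copy of
  B_2 the order characterisation and the counting identities produce such p, q.
\<close>

section \<open>Counting positions with small values\<close>

definition below :: "(nat \<Rightarrow> nat) \<Rightarrow> nat \<Rightarrow> nat \<Rightarrow> nat \<Rightarrow> nat set" where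
  "below w lo hi v = {k. lo < k \<and> k < hi \<and> w k < v}"

lemma finite_below [simp]: "finite (below w lo hi v)"
  by (rule finite_subset[of _ "{..<hi}"]) (auto simp: below_def)

lemma inv_count_between_below: "inv_count_between w i j = card (below w i j (w i))"
  by (simp add: inv_count_between_def below_def)

lemma inv_count_below: "inv_count w n i = card (below w i (Suc n) (w i))"
  unfolding inv_count_def below_def by (simp add: less_Suc_eq_le)

lemma card_below_mono:
  assumes "lo \<le> lo'" "hi' \<le> hi" "v' \<le> v"
  shows "card (below w lo' hi' v') \<le> card (below w lo hi v)"
  by (rule card_mono) (use assms in \<open>auto simp: below_def\<close>)

lemma card_below_split:
  assumes "lo < m" "m < hi" "\<not> w m < v"
  shows "card (below w lo hi v) = card (below w lo m v) + card (below w m hi v)"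
proof -
  have "below w lo hi v = below w lo m v \<union> below w m hi v"
    using assms by (auto simp: below_def) (metis linorder_neqE_nat)
  moreover have "below w lo m v \<inter> below w m hi v = {}"
    by (auto simp: below_def)
  ultimately show ?thesis by (simp add: card_Un_disjoint)
qed

lemma inv_count_between_triangle:
  assumes "i' < i" "i < j" "w i' < w i"
  shows "inv_count_between w i' j \<le> inv_count_between w i' i + inv_count_between w i j"
proof -
  have "card (below w i' j (w i')) = card (below w i' i (w i')) + card (below w i j (w i'))"
    using assms by (intro card_below_split) auto
  moreover have "card (below w i j (w i')) \<le> card (below w i j (w i))"
    using assms by (intro card_below_mono) auto
  ultimately show ?thesis by (simp add: inv_count_between_below)
qed

lemma inv_count_split:
  assumes "p < q" "q \<le> n" "w p < w q"
  shows "inv_count w n p = inv_count_between w p q + card (below w q (Suc n) (w p))"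
  using card_below_split[of p q "Suc n" w "w p"] assms
  by (simp add: inv_count_below inv_count_between_below)

section \<open>The patterns 3412 and 3421\<close>

definition pattern_34 :: "(nat \<Rightarrow> nat) \<Rightarrow> nat \<Rightarrow> nat \<Rightarrow> nat \<Rightarrow> bool" where
  "pattern_34 w n p q \<longleftrightarrow>
     1 \<le> p \<and> p < q \<and> q \<le> n \<and> w p < w q \<and> 2 \<le> card (below w q (Suc n) (w p))"

text \<open>Containing 3412 or 3421 means exactly having a 34 followed by two smaller
  entries; the order of those two entries distinguishes the two patterns.\<close>
lemma contains_3412_or_3421_iff:
  assumes "inj w"
  shows "contains_3412 w n \<or> contains_3421 w n \<longleftrightarrow> (\<exists>p q. pattern_34 w n p q)"
proof
  assume "contains_3412 w n \<or> contains_3421 w n"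
  then obtain p q r s where pqrs: "1 \<le> p" "p < q" "q < r" "r < s" "s \<le> n"
    "w r < w p" "w s < w p" "w p < w q"
  proof
    assume "contains_3412 w n"
    then obtain p q r s where "1 \<le> p" "p < q" "q < r" "r < s" "s \<le> n"
      "w r < w s" "w s < w p" "w p < w q" unfolding contains_3412_def by blast
    then show ?thesis using that[of p q r s] by linarith
  next
    assume "contains_3421 w n"
    then obtain p q r s where "1 \<le> p" "p < q" "q < r" "r < s" "s \<le> n"
      "w s < w r" "w r < w p" "w p < w q" unfolding contains_3421_def by blast
    then show ?thesis using that[of p q r s] by linarith
  qed
  then have "{r, s} \<subseteq> below w q (Suc n) (w p)" by (auto simp: below_def)
  then have "card {r, s} \<le> card (below w q (Suc n) (w p))" by (intro card_mono) auto
  with pqrs show "\<exists>p q. pattern_34 w n p q"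
    unfolding pattern_34_def by (intro exI[of _ p] exI[of _ q]) auto
next
  assume "\<exists>p q. pattern_34 w n p q"
  then obtain p q where pq: "pattern_34 w n p q" by blast
  let ?S = "below w q (Suc n) (w p)"
  have "1 < card ?S" using pq by (simp add: pattern_34_def)
  then obtain k l where kl: "k \<in> ?S" "l \<in> ?S" "k < l"
    by (metis One_nat_def card_le_Suc0_iff_eq finite_below linorder_neqE_nat not_le)
  have "w k \<noteq> w l" using assms kl(3) by (metis inj_eq less_irrefl)
  have k: "q < k" "k \<le> n" "w k < w p" and l: "q < l" "l \<le> n" "w l < w p"
    using kl by (auto simp: below_def)
  have pq': "1 \<le> p" "p < q" "w p < w q" using pq by (auto simp: pattern_34_def)
  consider "w k < w l" | "w l < w k" using \<open>w k \<noteq> w l\<close> by linarith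
  then show "contains_3412 w n \<or> contains_3421 w n"
  proof cases
    case 1
    then have "contains_3412 w n" unfolding contains_3412_def
      using pq' k l kl(3) by (intro exI[of _ p] exI[of _ q] exI[of _ k] exI[of _ l]) auto
    then show ?thesis ..
  next
    case 2
    then have "contains_3421 w n" unfolding contains_3421_def
      using pq' k l kl(3) by (intro exI[of _ p] exI[of _ q] exI[of _ k] exI[of _ l]) auto
    then show ?thesis ..
  qed
qed

section \<open>The product order on the vectors m_{i,x}\<close>

lemma mvec_mono: "x \<le> y \<Longrightarrow> mvec w n i x \<le> mvec w n i y"
  by (auto simp: le_fun_def mvec_def intro: diff_le_mono)

lemma mvec_le_earlier:
  assumes "i' < i" "w i' < w i" "x + inv_count_between w i' i \<le> y"
  shows "mvec w n i x \<le> mvec w n i' y"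
proof (rule le_funI)
  fix j
  show "mvec w n i x j \<le> mvec w n i' y j"
  proof (cases "i < j \<and> j \<le> n \<and> \<not> w j < w i")
    case True
    then have "inv_count_between w i' j \<le> inv_count_between w i' i + inv_count_between w i j"
      using assms by (intro inv_count_between_triangle) auto
    then show ?thesis using True assms by (simp add: mvec_def)
  next
    case False
    then show ?thesis using assms by (auto simp: mvec_def)
  qed
qed

text \<open>Exact description of the order: comparing the i-th coordinates gives the
  necessity, the two previous lemmas the sufficiency.\<close>
lemma mvec_le_iff:
  assumes "inj w" "i \<le> n" "1 \<le> x"
  shows "mvec w n i x \<le> mvec w n i' y \<longleftrightarrow>
    (i' = i \<and> x \<le> y) \<or> (i' < i \<and> w i' < w i \<and> x + inv_count_between w i' i \<le> y)"
proof
  assume "mvec w n i x \<le> mvec w n i' y"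
  then have at_i: "x \<le> mvec w n i' y i"
    using assms(2) le_funD[of "mvec w n i x" "mvec w n i' y" i] by (simp add: mvec_def)
  have "w i' \<noteq> w i" if "i' < i" using assms(1) that by (metis inj_eq less_irrefl)
  then show "(i' = i \<and> x \<le> y) \<or> (i' < i \<and> w i' < w i \<and> x + inv_count_between w i' i \<le> y)"
    using at_i assms(2,3) by (auto simp: mvec_def split: if_splits)
next
  assume "(i' = i \<and> x \<le> y) \<or> (i' < i \<and> w i' < w i \<and> x + inv_count_between w i' i \<le> y)"
  then show "mvec w n i x \<le> mvec w n i' y"
    using mvec_mono mvec_le_earlier by blast
qed

lemma mem_Mset_iff:
  "v \<in> Mset w n \<longleftrightarrow>
     (\<exists>i x. v = mvec w n i x \<and> 1 \<le> i \<and> i \<le> n \<and> 1 \<le> x \<and> x \<le> inv_count w n i)"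
  unfolding Mset_def by (auto 4 3)

section \<open>From a pattern to a copy of B_2\<close>

text \<open>For a pattern at p < q with c = c_{p,q}, the vectors m_{q,1} < m_{p,c+1}, m_{q,2} <
  m_{p,c+2} form a copy of B_2: m_{p,c+1} and m_{q,2} are incomparable because
  the index forces m_{p,c+1} \<le> m_{q,2} to fail and the gap c_{p,q} prevents the converse.
  The two later small values guarantee c_q \<ge> 2 and c_p \<ge> c + 2.\<close>
lemma pattern_34_not_B2_free:
  assumes inj: "inj w" and pat: "pattern_34 w n p q"
  shows "\<not> B2_free (Mset w n)"
proof -
  define c where "c = inv_count_between w p q"
  have pq: "1 \<le> p" "p < q" "q \<le> n" "w p < w q"
    and tail: "2 \<le> card (below w q (Suc n) (w p))"
    using pat by (auto simp: pattern_34_def)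
  have "c + 2 \<le> inv_count w n p"
    using inv_count_split[OF pq(2,3,4)] tail by (simp add: c_def)
  moreover have "card (below w q (Suc n) (w p)) \<le> inv_count w n q"
    unfolding inv_count_below using pq by (intro card_below_mono) auto
  ultimately have mem: "mvec w n q 1 \<in> Mset w n" "mvec w n p (c + 1) \<in> Mset w n"
      "mvec w n q 2 \<in> Mset w n" "mvec w n p (c + 2) \<in> Mset w n"
    using pq tail unfolding mem_Mset_iff by (intro exI; force)+
  have le_q: "mvec w n q x \<le> mvec w n i y \<longleftrightarrow>
      (i = q \<and> x \<le> y) \<or> (i = p \<and> x + c \<le> y) \<or> (i \<noteq> p \<and> i < q \<and> w i < w q \<and>
         x + inv_count_between w i q \<le> y)" if "1 \<le> x" for x y i
    using mvec_le_iff[OF inj pq(3) that] pq c_def by auto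
  have le_p: "mvec w n p x \<le> mvec w n i y \<longleftrightarrow>
      (i = p \<and> x \<le> y) \<or> (i < p \<and> w i < w p \<and> x + inv_count_between w i p \<le> y)"
    if "1 \<le> x" for x y i
    using mvec_le_iff[OF inj _ that] pq by auto
  have "mvec w n q 1 < mvec w n p (c + 1)" "mvec w n q 1 < mvec w n q 2"
    "mvec w n p (c + 1) < mvec w n p (c + 2)" "mvec w n q 2 < mvec w n p (c + 2)"
    "\<not> mvec w n p (c + 1) \<le> mvec w n q 2" "\<not> mvec w n q 2 \<le> mvec w n p (c + 1)"
    unfolding less_le_not_le using le_q le_p pq by auto
  then show ?thesis
    unfolding B2_free_def using mem by blast
qed

section \<open>From a copy of B_2 to a pattern\<close>

text \<open>If m_{C,x} \<le> m_{D,y} in M_w with D < C and x \<ge> 2, then D, C is a pattern: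
  y \<le> c_D = c_{D,C} + #(values below w(D) after C) forces two such values.\<close>
lemma pattern_from_high_cover:
  assumes "1 \<le> D" "D < C" "C \<le> n" "w D < w C"
    and "2 + inv_count_between w D C \<le> y" "y \<le> inv_count w n D"
  shows "pattern_34 w n D C"
  using assms inv_count_split[of D C n w] by (simp add: pattern_34_def)

text \<open>Counting for the remaining configuration D < B < C < A with w(D) < w(C) < w(B) < w(A):
  c_{B,A} counts C and all positions between B and A with value below w(D), so the
  chain 1 + c_{B,A} \<le> x_b, x_b + c_{D,B} \<le> y \<le> c_D leaves two values below w(D) after A.\<close>
lemma pattern_from_low_chain:
  assumes "1 \<le> D" "D < B" "B < C" "C < A" "A \<le> n"
    and "w D < w C" "w C < w B" "w B < w A"
    and "1 + inv_count_between w B A \<le> xb" "xb + inv_count_between w D B \<le> y"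
    and "y \<le> inv_count w n D"
  shows "pattern_34 w n D A"
proof -
  let ?S = "below w B A (w D)"
  have "inv_count w n D = inv_count_between w D B + card (below w B (Suc n) (w D))"
    using assms by (intro inv_count_split) auto
  also have "card (below w B (Suc n) (w D)) = card ?S + card (below w A (Suc n) (w D))"
    using assms by (intro card_below_split) auto
  finally have split: "inv_count w n D =
      inv_count_between w D B + card ?S + card (below w A (Suc n) (w D))" by simp
  have "insert C ?S \<subseteq> below w B A (w B)" "C \<notin> ?S"
    using assms by (auto simp: below_def)
  then have "card (insert C ?S) \<le> card (below w B A (w B))"
    by (intro card_mono) auto
  then have "card ?S + 1 \<le> inv_count_between w B A"
    using \<open>C \<notin> ?S\<close> by (simp add: inv_count_between_below)
  then show ?thesis
    using assms split by (simp add: pattern_34_def)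
qed

text \<open>Reading the four relations through mvec_le_iff gives
  D \<le> B < C \<le> A; if x_c \<ge> 2 the cover c \<le> d already gives a pattern, otherwise
  incomparability of b and c forces w(C) < w(B) and the chain through b does.\<close>
lemma B2_copy_gives_pattern:
  assumes inj: "inj w"
    and idx: "A \<le> n" "B \<le> n" "C \<le> n" "1 \<le> D" "B < C"
    and par: "1 \<le> xa" "1 \<le> xb" "1 \<le> xc" "y \<le> inv_count w n D"
    and ac: "mvec w n A xa < mvec w n C xc"
    and ab: "mvec w n A xa \<le> mvec w n B xb"
    and bd: "mvec w n B xb \<le> mvec w n D y"
    and cd: "mvec w n C xc \<le> mvec w n D y"
    and cb: "\<not> mvec w n C xc \<le> mvec w n B xb"
  shows "\<exists>p q. pattern_34 w n p q"
proof -
  have ac': "(C = A \<and> xa < xc) \<or> (C < A \<and> w C < w A \<and> xa + inv_count_between w C A \<le> xc)"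
    using ac mvec_le_iff[OF inj idx(1) par(1), of C xc] by (auto simp: less_le)
  have ab': "(B = A \<and> xa \<le> xb) \<or> (B < A \<and> w B < w A \<and> xa + inv_count_between w B A \<le> xb)"
    using ab mvec_le_iff[OF inj idx(1) par(1)] by simp
  have bd': "(D = B \<and> xb \<le> y) \<or> (D < B \<and> w D < w B \<and> xb + inv_count_between w D B \<le> y)"
    using bd mvec_le_iff[OF inj idx(2) par(2)] by simp
  have "D < C" "w D < w C" "xc + inv_count_between w D C \<le> y"
    using cd mvec_le_iff[OF inj idx(3) par(3)] bd' idx(5) by auto
  show ?thesis
  proof (cases "2 \<le> xc")
    case True
    then have "2 + inv_count_between w D C \<le> y"
      using \<open>xc + inv_count_between w D C \<le> y\<close> by linarith
    then show ?thesis
      using pattern_from_high_cover idx(3,4) par(4) \<open>D < C\<close> \<open>w D < w C\<close> by blast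
  next
    case False
    then have "xc = 1" "C < A" using par(1,3) ac' by auto
    then have BA: "B < A" "w B < w A" "1 + inv_count_between w B A \<le> xb"
      using ab' idx(5) par(1) by auto
    have "\<not> w B < w C"
    proof
      assume "w B < w C"
      moreover have "inv_count_between w B C \<le> inv_count_between w B A"
        unfolding inv_count_between_below using \<open>C < A\<close> by (intro card_below_mono) auto
      ultimately show False
        using cb mvec_le_iff[OF inj idx(3) par(3)] idx(5) BA(3) \<open>xc = 1\<close> by auto
    qed
    moreover have "w B \<noteq> w C" using idx(5) by (simp add: inj_eq[OF inj])
    ultimately have "w C < w B" by linarith
    then have "D < B" "xb + inv_count_between w D B \<le> y"
      using bd' \<open>w D < w C\<close> by auto
    then show ?thesis
      using pattern_from_low_chain[of D B C A n w xb y] idx par BA \<open>C < A\<close> \<open>w C < w B\<close>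
        \<open>w D < w C\<close> by blast
  qed
qed

text \<open>Any copy of B_2 in M_w yields a pattern; by symmetry of B_2 in its two middle
  elements we may order their indices, which cannot coincide since vectors with equal
  index are comparable.\<close>
lemma not_B2_free_pattern_34:
  assumes inj: "inj w" and not_free: "\<not> B2_free (Mset w n)"
  shows "\<exists>p q. pattern_34 w n p q"
proof -
  obtain a b c d where mem: "a \<in> Mset w n" "b \<in> Mset w n" "c \<in> Mset w n" "d \<in> Mset w n"
    and B2: "a < b" "a < c" "b < d" "c < d" "\<not> b \<le> c" "\<not> c \<le> b"
    using not_free unfolding B2_free_def by blast
  obtain A xa B xb C xc D y where
    vec: "a = mvec w n A xa" "b = mvec w n B xb" "c = mvec w n C xc" "d = mvec w n D y"
    and idx: "A \<le> n" "B \<le> n" "C \<le> n" "1 \<le> D"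
    and par: "1 \<le> xa" "1 \<le> xb" "1 \<le> xc" "y \<le> inv_count w n D"
    using mem unfolding mem_Mset_iff by metis
  have "B \<noteq> C"
    using B2(5,6) mvec_mono[of xb xc w n B] mvec_mono[of xc xb w n B] vec by force
  then consider "B < C" | "C < B" by linarith
  then show ?thesis
  proof cases
    case 1
    show ?thesis
      by (rule B2_copy_gives_pattern[OF inj idx 1 par]) (use B2 vec in auto)
  next
    case 2
    show ?thesis
      by (rule B2_copy_gives_pattern[OF inj idx(1,3,2,4) 2 par(1,3,2,4)]) (use B2 vec in auto)
  qed
qed

theorem mainTheorem1:
  fixes w :: "nat \<Rightarrow> nat" and n :: nat
  assumes "1 \<le> n" and "w permutes {1..n}"
  shows "B2_free (Mset w n) \<longleftrightarrow> \<not> contains_3412 w n \<and> \<not> contains_3421 w n"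
proof -
  have inj: "inj w" using permutes_inj[OF assms(2)] .
  have "\<not> B2_free (Mset w n) \<longleftrightarrow> (\<exists>p q. pattern_34 w n p q)"
    using not_B2_free_pattern_34[OF inj] pattern_34_not_B2_free[OF inj] by blast
  then show ?thesis
    using contains_3412_or_3421_iff[OF inj] by blast
qed

end
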